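(* Let $q>0$, $R>0$. For $(\xi,\eta,\sigma)\in\mathbb{R}^3$ and $\zeta=\xi+i\eta$ let $\Psi=(\psi_1,\psi_2)^T$ solve on $[0,R]$ $$d\psi_1=i(q\psi_2-\zeta\psi_1)\,dx+i\sigma\psi_2\circ dW_x,\qquad d\psi_2=i(q\psi_1+\zeta\psi_2)\,dx+i\sigma\psi_1\circ dW_x,\qquad \Psi(0)=(1,0)^T,$$ and set $F(\xi,\eta,\sigma):=\psi_1(R)$. Suppose $\eta_0\in(0,q)$ is such that $F(0,\eta_0,0)=0$ (i.e. $i\eta_0$ is a discrete eigenvalue of the deterministic problem with potential $q\mathbf{1}_{[0,R]}$). Then the Jacobian determinant $$\det\begin{pmatrix}\partial_\xi\,\mathrm{Re}F&\partial_\eta\,\mathrm{Re}F\\ \partial_\xi\,\mathrm{Im}F&\partial_\eta\,\mathrm{Im}F\end{pmatrix}$$ at the point $(0,\eta_0,0)$ is nonzero. Equivalently, with $c_0=\sqrt{q^2-\eta_0^2}$, $$\Big(\frac{q^2}{c_0^3}+\frac{R\eta_0}{c_0}\Big)\sin(c_0R)-\frac{R\eta_0^2}{c_0^2}\cos(c_0R)\neq0 .$$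
   Context: At $\sigma=0$ the system is deterministic and $\psi_1(R)=\cos(cR)-\frac{i\zeta}{c}\sin(cR)$ with $c=\sqrt{q^2+\zeta^2}$. *)

theory Defs
  imports "HOL-Analysis.Analysis"
begin

text \<open>Deterministic (sigma = 0) value F(xi,eta,0) = psi_1(R), given in closed form:
  psi_1(R) = cos(cR) - (i zeta / c) sin(cR), c = sqrt(q^2+zeta^2), zeta = xi + i eta.\<close>
definition F0 :: "real \<Rightarrow> real \<Rightarrow> real \<Rightarrow> real \<Rightarrow> complex" where
  "F0 q R xi eta =
     (let zeta = Complex xi eta;
          c = csqrt (complex_of_real (q^2) + zeta^2)
      in cos (c * complex_of_real R) - (\<i> * zeta / c) * sin (c * complex_of_real R))"

end

theory Submission
  imports Defs
begin

(* F0 q R x y is the value at zeta = x + i y of the function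
     psi1(zeta) = cos(c R) - (i zeta / c) sin(c R),   c = csqrt(q^2 + zeta^2),
   which is complex differentiable near zeta0 = i eta0 because q^2 - eta0^2 > 0 keeps
   the square root away from its branch cut.  For any complex differentiable f, the
   Cauchy-Riemann equations make the real Jacobian of (x,y) |-> f(x + i y) equal to
   |f'|^2, so it suffices to show psi1'(i eta0) <> 0.  With c0 = sqrt(q^2 - eta0^2):
     psi1(i eta0)  = cos(c0 R) + (eta0/c0) sin(c0 R),
     psi1'(i eta0) = -i ((q^2/c0^3 + R eta0/c0) sin(c0 R) - (R eta0^2/c0^2) cos(c0 R)).
   The eigenvalue condition psi1(i eta0) = 0 forces sin(c0 R) <> 0 and turns the bracket
   into sin(c0 R) times a positive quantity, hence the Jacobian is nonzero. *)

definition psi1 :: "real \<Rightarrow> real \<Rightarrow> complex \<Rightarrow> complex" where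
  "psi1 q R z =
     (let c = csqrt (complex_of_real (q^2) + z^2)
      in cos (c * complex_of_real R) - (\<i> * z / c) * sin (c * complex_of_real R))"

lemma F0_eq_psi1: "F0 q R x y = psi1 q R (Complex x y)"
  by (simp add: F0_def psi1_def Let_def)

lemma Re_Im_has_real_derivative:
  assumes "(h has_vector_derivative (D::complex)) (at x)"
  shows "((\<lambda>t. Re (h t)) has_real_derivative Re D) (at x)"
    and "((\<lambda>t. Im (h t)) has_real_derivative Im D) (at x)"
proof -
  have h: "(h has_derivative (\<lambda>t. t *\<^sub>R D)) (at x)"
    using assms by (simp add: has_vector_derivative_def)
  have "(\<lambda>t. Re (t *\<^sub>R D)) = (*) (Re D)" "(\<lambda>t. Im (t *\<^sub>R D)) = (*) (Im D)"
    by (auto simp: mult.commute)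
  then show "((\<lambda>t. Re (h t)) has_real_derivative Re D) (at x)"
    and "((\<lambda>t. Im (h t)) has_real_derivative Im D) (at x)"
    using has_derivative_Re[OF h] has_derivative_Im[OF h]
    by (simp_all add: has_field_derivative_def)
qed

lemma partial_derivs_of_field_derivative:
  fixes f :: "complex \<Rightarrow> complex"
  assumes df: "(f has_field_derivative D) (at (Complex x0 y0))"
  shows "((\<lambda>x. Re (f (Complex x y0))) has_real_derivative Re D) (at x0)"
    and "((\<lambda>x. Im (f (Complex x y0))) has_real_derivative Im D) (at x0)"
    and "((\<lambda>y. Re (f (Complex x0 y))) has_real_derivative - Im D) (at y0)"
    and "((\<lambda>y. Im (f (Complex x0 y))) has_real_derivative Re D) (at y0)"
proof -
  have horiz: "((\<lambda>x::real. Complex x y0) has_vector_derivative 1) (at x0)"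
    unfolding Complex_eq by (auto intro!: derivative_eq_intros)
  have vert: "((\<lambda>y::real. Complex x0 y) has_vector_derivative \<i>) (at y0)"
    unfolding Complex_eq by (auto intro!: derivative_eq_intros)
  have dx: "((\<lambda>x. f (Complex x y0)) has_vector_derivative D) (at x0)"
    using field_vector_diff_chain_at[OF horiz df] by (simp add: o_def)
  have dy: "((\<lambda>y. f (Complex x0 y)) has_vector_derivative \<i> * D) (at y0)"
    using field_vector_diff_chain_at[OF vert df] by (simp add: o_def)
  show "((\<lambda>x. Re (f (Complex x y0))) has_real_derivative Re D) (at x0)"
    and "((\<lambda>x. Im (f (Complex x y0))) has_real_derivative Im D) (at x0)"
    by (rule Re_Im_has_real_derivative[OF dx])+
  show "((\<lambda>y. Re (f (Complex x0 y))) has_real_derivative - Im D) (at y0)"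
    and "((\<lambda>y. Im (f (Complex x0 y))) has_real_derivative Re D) (at y0)"
    using Re_Im_has_real_derivative[OF dy] by simp_all
qed

lemma jacobian_of_field_derivative:
  fixes f :: "complex \<Rightarrow> complex"
  assumes df: "(f has_field_derivative D) (at (Complex x0 y0))"
  shows "(\<lambda>p. f (Complex (fst p) (snd p))) differentiable at (x0, y0)"
    and "deriv (\<lambda>x. Re (f (Complex x y0))) x0 * deriv (\<lambda>y. Im (f (Complex x0 y))) y0
       - deriv (\<lambda>y. Re (f (Complex x0 y))) y0 * deriv (\<lambda>x. Im (f (Complex x y0))) x0
       = (cmod D)^2"
proof -
  have "bounded_linear (\<lambda>p::real \<times> real. Complex (fst p) (snd p))"
    unfolding Complex_eq
    by (intro bounded_linear_add bounded_linear_compose[OF bounded_linear_of_real]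
          bounded_linear_compose[OF bounded_linear_mult_right] bounded_linear_fst bounded_linear_snd)
  then have "(\<lambda>p::real \<times> real. Complex (fst p) (snd p)) differentiable at (x0, y0)"
    by (rule bounded_linear_imp_differentiable)
  moreover have "f differentiable at (Complex x0 y0)"
    using df field_differentiable_imp_differentiable field_differentiable_def by blast
  ultimately show "(\<lambda>p. f (Complex (fst p) (snd p))) differentiable at (x0, y0)"
    using differentiable_chain_at[of _ "(x0, y0)" f] by (simp add: o_def)
  show "deriv (\<lambda>x. Re (f (Complex x y0))) x0 * deriv (\<lambda>y. Im (f (Complex x0 y))) y0
       - deriv (\<lambda>y. Re (f (Complex x0 y))) y0 * deriv (\<lambda>x. Im (f (Complex x y0))) x0
       = (cmod D)^2"
    using partial_derivs_of_field_derivative[OF df, THEN DERIV_imp_deriv]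
    by (simp add: cmod_power2 flip: power2_eq_square)
qed

lemma csqrt_at_imaginary:
  fixes q eta c0 :: real
  assumes c0: "c0 > 0" and hc: "c0^2 = q^2 - eta^2"
  shows "(complex_of_real q)^2 + (\<i> * of_real eta)^2 = of_real (c0^2)"
    and "csqrt ((complex_of_real q)^2 + (\<i> * of_real eta)^2) = of_real c0"
proof -
  show w: "(complex_of_real q)^2 + (\<i> * of_real eta)^2 = of_real (c0^2)"
    by (simp add: hc power_mult_distrib)
  show "csqrt ((complex_of_real q)^2 + (\<i> * of_real eta)^2) = of_real c0"
    unfolding w using c0 by (simp add: csqrt_of_real)
qed

lemma psi1_at_imaginary:
  fixes q R eta c0 :: real
  assumes c0: "c0 > 0" and hc: "c0^2 = q^2 - eta^2"
  shows "psi1 q R (\<i> * of_real eta) = of_real (cos (c0 * R) + eta / c0 * sin (c0 * R))"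
proof -
  have "psi1 q R (\<i> * of_real eta)
      = cos (of_real c0 * of_real R) - (\<i> * (\<i> * of_real eta) / of_real c0) * sin (of_real c0 * of_real R)"
    by (simp only: psi1_def Let_def of_real_power csqrt_at_imaginary(2)[OF c0 hc])
  also have "\<dots> = of_real (cos (c0 * R) + eta / c0 * sin (c0 * R))"
    by (simp add: sin_of_real cos_of_real flip: of_real_mult)
  finally show ?thesis .
qed

text \<open>Since q^2 + zeta^2 = c0^2 > 0 there, csqrt is holomorphic at that point (off its branch
  cut), so the chain rule applies; the result is simplified using c = c0 and q^2 = c0^2 + eta^2.\<close>
lemma psi1_derivative_at_imaginary:
  fixes q R eta c0 :: real
  assumes c0: "c0 > 0" and hc: "c0^2 = q^2 - eta^2"
  shows "(psi1 q R has_field_derivative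
           - \<i> * of_real ((q^2 / c0^3 + R * eta / c0) * sin (c0 * R)
                           - R * eta^2 / c0^2 * cos (c0 * R)))
         (at (\<i> * of_real eta))"
proof -
  let ?z = "\<i> * complex_of_real eta"
  have c0ne: "c0 \<noteq> 0" using c0 by simp
  have not_cut: "(complex_of_real q)^2 + ?z^2 \<notin> \<real>\<^sub>\<le>\<^sub>0"
    unfolding csqrt_at_imaginary(1)[OF c0 hc] using c0 by (simp add: complex_nonpos_Reals_iff)
  note sqrt_z = csqrt_at_imaginary(2)[OF c0 hc]
  have trig: "sin (complex_of_real c0 * complex_of_real R) = of_real (sin (c0 * R))"
    "sin (complex_of_real R * complex_of_real c0) = of_real (sin (c0 * R))"
    "cos (complex_of_real c0 * complex_of_real R) = of_real (cos (c0 * R))"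
    "cos (complex_of_real R * complex_of_real c0) = of_real (cos (c0 * R))"
    by (simp_all add: mult.commute flip: of_real_mult sin_of_real cos_of_real)
  have q2: "q^2 = c0^2 + eta^2" using hc by simp
  have psi1_eq: "psi1 q R = (\<lambda>z. cos (csqrt ((complex_of_real q)^2 + z^2) * complex_of_real R)
          - (\<i> * z / csqrt ((complex_of_real q)^2 + z^2))
            * sin (csqrt ((complex_of_real q)^2 + z^2) * complex_of_real R))"
    by (simp add: fun_eq_iff psi1_def Let_def)
  show ?thesis
    unfolding psi1_eq
    apply (rule derivative_eq_intros refl | simp add: sqrt_z not_cut c0ne)+
    apply (simp add: trig q2 flip: of_real_power)
    apply (simp add: c0ne complex_eq_iff field_simps power2_eq_square power3_eq_cube)
    done
qed

text \<open>Nondegeneracy: at a zero of psi1(i eta) the bracket above cannot vanish.  The zero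
  condition rules out sin(c0 R) = 0 and lets us eliminate cos(c0 R).\<close>
lemma eigenvalue_nondegenerate:
  fixes q R eta c0 :: real
  assumes "R > 0" "eta > 0" "c0 > 0"
    and hc: "c0^2 = q^2 - eta^2"
    and zero: "cos (c0 * R) + eta / c0 * sin (c0 * R) = 0"
  shows "(q^2 / c0^3 + R * eta / c0) * sin (c0 * R) - R * eta^2 / c0^2 * cos (c0 * R) \<noteq> 0"
proof -
  have cos_eq: "cos (c0 * R) = - eta / c0 * sin (c0 * R)" using zero by simp
  have sin_ne: "sin (c0 * R) \<noteq> 0"
    using cos_eq sin_cos_squared_add[of "c0 * R"] by auto
  have "(q^2 / c0^3 + R * eta / c0) * sin (c0 * R) - R * eta^2 / c0^2 * cos (c0 * R)
      = sin (c0 * R) * (q^2 / c0^3 + R * eta / c0 + R * eta^3 / c0^3)"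
    unfolding cos_eq using \<open>c0 > 0\<close> by (simp add: field_simps power2_eq_square power3_eq_cube)
  moreover have "q^2 / c0^3 + R * eta / c0 + R * eta^3 / c0^3 > 0"
    using assms by (intro add_pos_pos add_nonneg_pos divide_pos_pos mult_pos_pos) auto
  ultimately show ?thesis using sin_ne by simp
qed

theorem mainTheorem6:
  fixes q R eta0 :: real
  assumes "q > 0" and "R > 0"
    and "0 < eta0" and "eta0 < q"
    and "F0 q R 0 eta0 = 0"
  shows "(\<lambda>p. F0 q R (fst p) (snd p)) differentiable at (0, eta0)
    \<and> deriv (\<lambda>x. Re (F0 q R x eta0)) 0 * deriv (\<lambda>y. Im (F0 q R 0 y)) eta0
      - deriv (\<lambda>y. Re (F0 q R 0 y)) eta0 * deriv (\<lambda>x. Im (F0 q R x eta0)) 0 \<noteq> 0"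
proof -
  define c0 where "c0 = sqrt (q^2 - eta0^2)"
  have "eta0^2 < q^2" using assms by (simp add: power_strict_mono)
  then have c0: "c0 > 0" and hc: "c0^2 = q^2 - eta0^2" unfolding c0_def by simp_all
  have z0: "Complex 0 eta0 = \<i> * of_real eta0" by (simp add: Complex_eq)
  define K where "K = (q^2 / c0^3 + R * eta0 / c0) * sin (c0 * R) - R * eta0^2 / c0^2 * cos (c0 * R)"
  have deriv: "(psi1 q R has_field_derivative - \<i> * of_real K) (at (Complex 0 eta0))"
    unfolding z0 K_def by (rule psi1_derivative_at_imaginary[OF c0 hc])
  have "complex_of_real (cos (c0 * R) + eta0 / c0 * sin (c0 * R)) = 0"
    using assms(5) psi1_at_imaginary[OF c0 hc, of R] by (simp only: F0_eq_psi1 z0)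
  then have "cos (c0 * R) + eta0 / c0 * sin (c0 * R) = 0"
    by (simp only: of_real_eq_0_iff)
  then have "K \<noteq> 0"
    unfolding K_def using eigenvalue_nondegenerate assms c0 hc by blast
  then show ?thesis
    using jacobian_of_field_derivative[OF deriv] by (simp add: F0_eq_psi1)
qed

end
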